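(* Let $p$ be a prime with $p\equiv 1\pmod 8$ and $p\equiv 2\pmod 3$. Then there exist infinitely many septuples $(A,B,C,D,E,F,G)\in\mathbb{Z}^7$ of the following parametrized form: there are nonzero odd integers $\lambda,\gamma$ with $\gcd(\lambda,3\gamma)=\gcd(p,3\gamma)=\gcd(p,\lambda)=1$, nonzero integers $\epsilon_0,\delta_0$ with $p\lambda^2\epsilon_0+9\gamma^2\delta_0=1$, and integers $\mu,t_0,F_0$ such that $A=\frac{p\lambda^2-9\gamma^2}{2}$, $B=2pF_0^2\left(\delta_0-\epsilon_0-\mu(p\lambda^2+9\gamma^2)\right)+(p\lambda^2+9\gamma^2)t_0F_0$, $C=2pF_0^2\left(\delta_0+\epsilon_0-\mu(p\lambda^2-9\gamma^2)\right)+(p\lambda^2-9\gamma^2)t_0F_0$, $D=\frac{p\lambda^2+9\gamma^2}{2}$, $E=F_0\left(2pF_0(\epsilon_0+9\mu\gamma^2)-9\gamma^2t_0\right)\left(2F_0(\delta_0-p\mu\lambda^2)+\lambda^2t_0\right)$, $F=2F_0$, $G=3\lambda\gamma$; and such that each of these septuples satisfies the following conditions: (A1) $B^2-C^2+2pEF=0$, $2AB-2CD+pF^2=0$, $A^2-D^2+pG^2=0$; (A3) $\gcd(A,D,G)=1$, $E\not\equiv 0\pmod p$, $G\not\equiv 0\pmod p$; (A4) for every odd prime $l$ with $l\ne3$, $l\ne p$ and $l\mid\gcd(AC-BD,\ DE-CF,\ AE-BF)$, $p$ is a square in $\mathbb{Q}_l^\times$; (A5) there is an integer $H$ with $G-EH^6\equiv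 0\pmod p$ such that $A+\zeta BH^4$ is a quadratic non-residue in $\mathbb{F}_p^\times$ for every cube root of unity $\zeta\in\mathbb{F}_p^\times$; (A7) $A+B\not\equiv 0\pmod 3$ and $G\equiv 0\pmod 3$; and, for every integer $n\ge 1$, (A6) $v_3(E)-v_3(G)<6n$.
   Context: $v_3$ denotes the $3$-adic valuation. *)

theory Defs
  imports "HOL-Number_Theory.Number_Theory"
begin

definition v3 :: "int \<Rightarrow> int" where
  "v3 x = int (multiplicity (3::int) x)"

text \<open>For a prime l, the (nonzero) integer a is a square in the field of l-adic numbers
  Q_l.  Since Q_l is not available, we use the definition: a is nonzero and is an l-adic
  limit of squares of rationals with denominator prime to l, i.e. for every k there are
  integers u, v with v a unit at l and u^2 - a v^2 divisible by l^k.  (The squares of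
  Q_l^x form a closed subgroup and Q is dense in Q_l, so this is exactly squareness.)\<close>
definition square_in_Ql :: "int \<Rightarrow> int \<Rightarrow> bool" where
  "square_in_Ql l a \<longleftrightarrow> a \<noteq> 0 \<and>
     (\<forall>k::nat. \<exists>u v :: int. coprime v l \<and> l ^ k dvd (u\<^sup>2 - a * v\<^sup>2))"

definition param_form :: "int \<Rightarrow> int \<Rightarrow> int \<Rightarrow> int \<Rightarrow> int \<Rightarrow> int \<Rightarrow> int \<Rightarrow> int \<Rightarrow> bool" where
  "param_form p A B C D E F G \<longleftrightarrow>
    (\<exists>lam \<gamma> \<epsilon>0 \<delta>0 \<mu> t0 F0 :: int.
       lam \<noteq> 0 \<and> \<gamma> \<noteq> 0 \<and> odd lam \<and> odd \<gamma> \<and>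
       gcd lam (3 * \<gamma>) = 1 \<and> gcd p (3 * \<gamma>) = 1 \<and> gcd p lam = 1 \<and>
       \<epsilon>0 \<noteq> 0 \<and> \<delta>0 \<noteq> 0 \<and> p * lam\<^sup>2 * \<epsilon>0 + 9 * \<gamma>\<^sup>2 * \<delta>0 = 1 \<and>
       A = (p * lam\<^sup>2 - 9 * \<gamma>\<^sup>2) div 2 \<and>
       B = 2 * p * F0\<^sup>2 * (\<delta>0 - \<epsilon>0 - \<mu> * (p * lam\<^sup>2 + 9 * \<gamma>\<^sup>2))
           + (p * lam\<^sup>2 + 9 * \<gamma>\<^sup>2) * t0 * F0 \<and>
       C = 2 * p * F0\<^sup>2 * (\<delta>0 + \<epsilon>0 - \<mu> * (p * lam\<^sup>2 - 9 * \<gamma>\<^sup>2))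
           + (p * lam\<^sup>2 - 9 * \<gamma>\<^sup>2) * t0 * F0 \<and>
       D = (p * lam\<^sup>2 + 9 * \<gamma>\<^sup>2) div 2 \<and>
       E = F0 * (2 * p * F0 * (\<epsilon>0 + 9 * \<mu> * \<gamma>\<^sup>2) - 9 * \<gamma>\<^sup>2 * t0)
              * (2 * F0 * (\<delta>0 - p * \<mu> * lam\<^sup>2) + lam\<^sup>2 * t0) \<and>
       F = 2 * F0 \<and>
       G = 3 * lam * \<gamma>)"

definition cond_A1 :: "int \<Rightarrow> int \<Rightarrow> int \<Rightarrow> int \<Rightarrow> int \<Rightarrow> int \<Rightarrow> int \<Rightarrow> int \<Rightarrow> bool" where
  "cond_A1 p A B C D E F G \<longleftrightarrow>
     B\<^sup>2 - C\<^sup>2 + 2 * p * E * F = 0 \<and> 2 * A * B - 2 * C * D + p * F\<^sup>2 = 0 \<and>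
     A\<^sup>2 - D\<^sup>2 + p * G\<^sup>2 = 0"

definition cond_A3 :: "int \<Rightarrow> int \<Rightarrow> int \<Rightarrow> int \<Rightarrow> int \<Rightarrow> int \<Rightarrow> int \<Rightarrow> int \<Rightarrow> bool" where
  "cond_A3 p A B C D E F G \<longleftrightarrow>
     gcd A (gcd D G) = 1 \<and> \<not> [E = 0] (mod p) \<and> \<not> [G = 0] (mod p)"

definition cond_A4 :: "int \<Rightarrow> int \<Rightarrow> int \<Rightarrow> int \<Rightarrow> int \<Rightarrow> int \<Rightarrow> int \<Rightarrow> int \<Rightarrow> bool" where
  "cond_A4 p A B C D E F G \<longleftrightarrow>
     (\<forall>l::int. prime l \<and> odd l \<and> l \<noteq> 3 \<and> l \<noteq> p \<and>
        l dvd gcd (A * C - B * D) (gcd (D * E - C * F) (A * E - B * F))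
        \<longrightarrow> square_in_Ql l p)"

definition cond_A5 :: "int \<Rightarrow> int \<Rightarrow> int \<Rightarrow> int \<Rightarrow> int \<Rightarrow> int \<Rightarrow> int \<Rightarrow> int \<Rightarrow> bool" where
  "cond_A5 p A B C D E F G \<longleftrightarrow>
     (\<exists>H::int. [G - E * H ^ 6 = 0] (mod p) \<and>
        (\<forall>\<zeta>::int. [\<zeta> ^ 3 = 1] (mod p) \<longrightarrow>
           \<not> [A + \<zeta> * B * H ^ 4 = 0] (mod p) \<and> \<not> QuadRes p (A + \<zeta> * B * H ^ 4)))"

definition cond_A7 :: "int \<Rightarrow> int \<Rightarrow> int \<Rightarrow> int \<Rightarrow> int \<Rightarrow> int \<Rightarrow> int \<Rightarrow> int \<Rightarrow> bool" where
  "cond_A7 p A B C D E F G \<longleftrightarrow> \<not> [A + B = 0] (mod 3) \<and> [G = 0] (mod 3)"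

end

theory Submission
  imports Defs
begin

text \<open>Take \<open>\<lambda> = \<gamma> = 1\<close> and \<open>F\<^sub>0 = 3\<close>, a Bezout pair \<open>p\<epsilon>\<^sub>0 + 9\<delta>\<^sub>0 = 1\<close>, and \<open>t\<^sub>0\<close> with
  \<open>3t\<^sub>0 \<equiv> -1 (mod p)\<close> and \<open>3 \<nmid> t\<^sub>0\<close>; the remaining parameter \<open>\<mu>\<close> is free and \<open>B\<close> is injective
  in it.  Then \<open>A = (p - 9)/2\<close>, \<open>D = (p + 9)/2\<close>, \<open>F = 6\<close>, \<open>G = 3\<close>, and (A1) is a polynomial
  identity modulo the Bezout relation.  Modulo \<open>p\<close> one has \<open>E \<equiv> 3 = G\<close>, so \<open>H = 1\<close> works in (A5);
  cubing is injective modulo \<open>p\<close> since \<open>p \<equiv> 2 (mod 3)\<close>, so \<open>\<zeta> \<equiv> 1\<close>, and \<open>2(A + B) \<equiv> -27\<close> is a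
  non-residue because 2 is a square (\<open>p \<equiv> 1 (mod 8)\<close>) while \<open>-3\<close> is not (\<open>p \<equiv> 2 (mod 3)\<close>).
  Condition (A4) holds vacuously: the relations (A1) force any prime \<open>l \<nmid> 3pFG\<close> dividing the three
  minors to divide \<open>pF\<^sup>2\<close>.  Finally \<open>E\<close> is 9 times a product prime to 3, so
  \<open>v\<^sub>3(E) - v\<^sub>3(G) = 1\<close>.\<close>

lemma fermat_theorem_int:
  fixes p a :: int
  assumes "prime p" and "\<not> p dvd a"
  shows "[a ^ (nat p - 1) = 1] (mod p)"
proof -
  have "coprime a p"
    using prime_imp_coprime[OF assms] by (rule coprime_commute[THEN iffD1])
  moreover have "residues p"
    using assms(1) by (simp add: residues_def prime_gt_1_int)
  ultimately have "[a ^ totient (nat p) = 1] (mod p)"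
    by (simp add: residues.euler_theorem)
  moreover have "totient (nat p) = nat p - 1"
    using assms(1) prime_int_nat_transfer totient_prime by blast
  ultimately show ?thesis
    by simp
qed

lemma cong_pow_fermat:
  fixes p x :: int
  assumes "prime p"
  shows "[x ^ ((nat p - 1) * k + 1) = x] (mod p)"
proof (cases "p dvd x")
  case True
  then have "[x ^ ((nat p - 1) * k + 1) = 0] (mod p)" and "[x = 0] (mod p)"
    by (simp_all add: cong_0_iff)
  then show ?thesis
    by (meson cong_sym cong_trans)
next
  case False
  have "[(x ^ (nat p - 1)) ^ k * x = 1 ^ k * x] (mod p)"
    using fermat_theorem_int[OF assms False] by (intro cong_mult cong_pow cong_refl)
  then show ?thesis
    by (metis power_add power_mult power_one power_one_right mult_1)
qed

text \<open>For \<open>p \<equiv> 2 (mod 3)\<close> the exponent \<open>2(p - 1) + 1\<close> is a multiple of 3, so cubing is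
  invertible modulo \<open>p\<close>.\<close>
lemma cong_cube_imp_cong:
  fixes p a b :: int
  assumes "prime p" and "[p = 2] (mod 3)" and "[a ^ 3 = b ^ 3] (mod p)"
  shows "[a = b] (mod p)"
proof -
  have "int (nat p mod 3) = 2"
    using assms(1,2) prime_gt_1_int[OF assms(1)] unfolding cong_def by (simp add: of_nat_mod)
  then have "nat p mod 3 = 2"
    by simp
  moreover have "3 dvd (n - 1) * 2 + 1" if "n mod 3 = 2" for n :: nat
    using that by presburger
  ultimately have "3 dvd (nat p - 1) * 2 + 1"
    by blast
  then obtain k where k: "(nat p - 1) * 2 + 1 = 3 * k" ..
  have "[(a ^ 3) ^ k = (b ^ 3) ^ k] (mod p)"
    using assms(3) by (rule cong_pow)
  then have "[a ^ ((nat p - 1) * 2 + 1) = b ^ ((nat p - 1) * 2 + 1)] (mod p)"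
    unfolding k by (simp add: power_mult)
  then show ?thesis
    using cong_pow_fermat[OF assms(1)] by (meson cong_sym cong_trans)
qed

lemma QuadRes_two:
  fixes p :: int
  assumes "prime p" and "[p = 1] (mod 8)"
  shows "QuadRes p 2"
proof -
  define n where "n = nat p"
  have p: "p = int n"
    using prime_gt_1_int[OF assms(1)] by (simp add: n_def)
  have "prime n"
    using assms(1) unfolding p by simp
  then have "n > 1"
    by (rule prime_gt_1_nat)
  have "int (n mod 8) = 1"
    using assms(2) unfolding p cong_def by (simp add: of_nat_mod)
  then have "n mod 8 = 1"
    by simp
  then have "8 dvd n - 1"
    using \<open>n > 1\<close> by presburger
  then have "card {x \<in> totatives n. ord n x = 8} = totient 8"
    using prime_card_elements_with_ord_eq_totient[OF \<open>n > 1\<close> \<open>prime n\<close>] by simp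
  then obtain x where x: "ord n x = 8"
    using card_gt_0_iff by force
  define X where "X = int x"
  have "[X ^ 8 = 1] (mod p)" and "\<not> [X ^ 4 = 1] (mod p)"
    using ord_divides[of x 8 n] ord_divides[of x 4 n] x
    unfolding p X_def by (simp_all flip: cong_int_iff)
  then have "p dvd (X ^ 4 - 1) * (X ^ 4 + 1)" and "\<not> p dvd X ^ 4 - 1"
    unfolding cong_iff_dvd_diff by (simp_all add: algebra_simps)
  then have "p dvd X ^ 4 + 1"
    using assms(1) prime_dvd_mult_iff by blast
  \<comment> \<open>\<open>X\<close> is a primitive 8th root of unity, and \<open>X + X\<inverse>\<close> squares to 2.\<close>
  moreover have "(X + X ^ 7) ^ 2 - 2 = (X ^ 4 + 1) * (X ^ 2 * (1 - X ^ 4 + X ^ 8) + 2 * X ^ 4 - 2)"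
    by (simp add: eval_nat_numeral algebra_simps)
  ultimately have "[(X + X ^ 7) ^ 2 = 2] (mod p)"
    unfolding cong_iff_dvd_diff by simp
  then show ?thesis
    unfolding QuadRes_def by blast
qed

text \<open>If \<open>z\<^sup>2 \<equiv> -27\<close> then \<open>(z - 3)\<^sup>3 \<equiv> 6\<^sup>3\<close>, so \<open>z \<equiv> 9\<close> and \<open>p\<close> divides \<open>9\<^sup>2 + 27 = 108\<close>.\<close>
lemma not_QuadRes_minus_27:
  fixes p :: int
  assumes "prime p" and "[p = 2] (mod 3)" and "p \<noteq> 2"
  shows "\<not> QuadRes p (-27)"
proof
  assume "QuadRes p (-27)"
  then obtain z where "[z ^ 2 = -27] (mod p)"
    unfolding QuadRes_def by blast
  then have z: "p dvd z\<^sup>2 + 27"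
    by (simp add: cong_iff_dvd_diff)
  have "(z - 3) ^ 3 - 6 ^ 3 = (z - 9) * (z\<^sup>2 + 27)"
    by (simp add: eval_nat_numeral algebra_simps)
  then have "[(z - 3) ^ 3 = 6 ^ 3] (mod p)"
    using z unfolding cong_iff_dvd_diff by simp
  then have "[z - 3 = 6] (mod p)"
    by (rule cong_cube_imp_cong[OF assms(1,2)])
  then have "p dvd (z\<^sup>2 + 27) - (z - 9) * (z + 9)"
    using z unfolding cong_iff_dvd_diff by (simp add: dvd_diff)
  then have "p dvd 2 ^ 2 * 3 ^ 3"
    by (simp add: algebra_simps power2_eq_square)
  then have "p dvd 2 \<or> p dvd 3"
    using assms(1) by (metis prime_dvd_mult_iff prime_dvd_power)
  then have "p = 2 \<or> p = 3"
    using assms(1) primes_dvd_imp_eq[of p 2] primes_dvd_imp_eq[of p 3] by auto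
  then show False
    using assms(2,3) unfolding cong_def by auto
qed

lemma not_QuadRes_if_double_cong_minus_27:
  fixes p x :: int
  assumes "prime p" and "[p = 1] (mod 8)" and "[p = 2] (mod 3)" and x: "[2 * x = -27] (mod p)"
  shows "\<not> [x = 0] (mod p) \<and> \<not> QuadRes p x"
proof
  have "p \<noteq> 2" and "p \<noteq> 3"
    using assms(2,3) unfolding cong_def by auto
  show "\<not> [x = 0] (mod p)"
  proof
    assume "[x = 0] (mod p)"
    then have "p dvd 2 * x"
      by (simp add: cong_0_iff)
    moreover have "p dvd 2 * x + 27"
      using x by (simp add: cong_iff_dvd_diff)
    ultimately have "p dvd 3 ^ 3"
      by (simp add: dvd_add_right_iff)
    then have "p dvd 3"
      using assms(1) prime_dvd_power by blast
    then show False
      using assms(1) \<open>p \<noteq> 3\<close> primes_dvd_imp_eq[of p 3] by simp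
  qed
  show "\<not> QuadRes p x"
  proof
    assume "QuadRes p x"
    then obtain y where "[y ^ 2 = x] (mod p)"
      unfolding QuadRes_def by blast
    moreover obtain w where "[w ^ 2 = 2] (mod p)"
      using QuadRes_two[OF assms(1,2)] unfolding QuadRes_def by blast
    ultimately have "[(w * y) ^ 2 = 2 * x] (mod p)"
      by (simp add: cong_mult power_mult_distrib)
    then have "[(w * y) ^ 2 = -27] (mod p)"
      using x by (rule cong_trans)
    then show False
      using not_QuadRes_minus_27[OF assms(1,3) \<open>p \<noteq> 2\<close>] unfolding QuadRes_def by blast
  qed
qed

text \<open>Such an \<open>l\<close> would divide \<open>B\<close> and \<open>C\<close> (according as \<open>l \<nmid> A\<close> or \<open>l | A\<close>, via the identities
  below), and then \<open>pF\<^sup>2 = 2CD - 2AB\<close>.\<close>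
lemma prime_not_dvd_all_minors:
  fixes A B C D E F G p l :: int
  assumes R1: "B\<^sup>2 - C\<^sup>2 + 2 * p * E * F = 0"
    and R2: "2 * A * B - 2 * C * D + p * F\<^sup>2 = 0"
    and R3: "A\<^sup>2 - D\<^sup>2 + p * G\<^sup>2 = 0"
    and l: "prime l" and "\<not> l dvd 3" and "\<not> l dvd p" and "\<not> l dvd F" and "\<not> l dvd G"
  shows "\<not> (l dvd A * C - B * D \<and> l dvd D * E - C * F \<and> l dvd A * E - B * F)"
proof
  assume "l dvd A * C - B * D \<and> l dvd D * E - C * F \<and> l dvd A * E - B * F"
  then have X: "l dvd A * C - B * D" and Y: "l dvd D * E - C * F" and Z: "l dvd A * E - B * F"
    by auto
  have "l dvd B \<and> l dvd C"
  proof (cases "l dvd A")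
    case False
    have "3 * p * G\<^sup>2 * B\<^sup>2 = (A * C - B * D)\<^sup>2 - 2 * B * D * (A * C - B * D)
        - 2 * p * F * A * (A * E - B * F) + A\<^sup>2 * (B\<^sup>2 - C\<^sup>2 + 2 * p * E * F)
        - 2 * A * B * (2 * A * B - 2 * C * D + p * F\<^sup>2) + 3 * B\<^sup>2 * (A\<^sup>2 - D\<^sup>2 + p * G\<^sup>2)"
      by (simp add: algebra_simps power2_eq_square)
    also have "\<dots> = (A * C - B * D) * (A * C - B * D) - 2 * B * D * (A * C - B * D)
        - 2 * p * F * A * (A * E - B * F)"
      using R1 R2 R3 by (simp add: power2_eq_square)
    finally have "l dvd 3 * p * G\<^sup>2 * B\<^sup>2"
      using X Z by (metis dvd_diff dvd_mult)
    then have "l dvd B"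
      using assms by (auto simp: prime_dvd_mult_iff prime_dvd_power_iff)
    moreover have "A * C = (A * C - B * D) + B * D"
      by simp
    ultimately show ?thesis
      using False X l by (metis dvd_add dvd_mult prime_dvd_mult_iff)
  next
    case True
    have "\<not> l dvd D"
    proof
      assume "l dvd D"
      with True have "l dvd D\<^sup>2 - A\<^sup>2"
        by (simp add: power2_eq_square)
      moreover have "D\<^sup>2 - A\<^sup>2 = p * G\<^sup>2"
        using R3 by simp
      ultimately show False
        using assms by (auto simp: prime_dvd_mult_iff prime_dvd_power_iff)
    qed
    have "B * D = A * C - (A * C - B * D)"
      by simp
    then have "l dvd B"
      using True X \<open>\<not> l dvd D\<close> l by (metis dvd_diff dvd_mult2 prime_dvd_mult_iff)
    have "3 * C\<^sup>2 * D\<^sup>2 = 4 * A * B * C * D - D\<^sup>2 * B\<^sup>2 - 2 * p * F * D * (D * E - C * F)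
        + D\<^sup>2 * (B\<^sup>2 - C\<^sup>2 + 2 * p * E * F) - 2 * C * D * (2 * A * B - 2 * C * D + p * F\<^sup>2)"
      by (simp add: algebra_simps power2_eq_square)
    also have "\<dots> = A * (4 * B * C * D) - B * (D\<^sup>2 * B) - 2 * p * F * D * (D * E - C * F)"
      using R1 R2 by (simp add: algebra_simps power2_eq_square)
    finally have "l dvd 3 * C\<^sup>2 * D\<^sup>2"
      using True \<open>l dvd B\<close> Y by (metis dvd_diff dvd_mult dvd_mult2)
    then show ?thesis
      using \<open>l dvd B\<close> \<open>\<not> l dvd D\<close> assms by (auto simp: prime_dvd_mult_iff prime_dvd_power_iff)
  qed
  moreover have "p * F\<^sup>2 = C * (2 * D) - B * (2 * A)"
    using R2 by (simp add: algebra_simps)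
  ultimately have "l dvd p * F\<^sup>2"
    by (metis dvd_diff dvd_mult2)
  then show False
    using assms by (auto simp: prime_dvd_mult_iff prime_dvd_power_iff)
qed

lemma v3_self: "v3 3 = 1"
  unfolding v3_def by (simp add: multiplicity_self)

lemma v3_nine_times:
  assumes "\<not> 3 dvd U" and "\<not> 3 dvd V"
  shows "v3 (9 * U * V) = 2"
proof -
  have "\<not> 3 dvd U * V"
    using assms by (simp add: prime_dvd_mult_iff)
  moreover have "9 * U * V = 3 ^ 2 * (U * V)"
    by simp
  ultimately show ?thesis
    unfolding v3_def by (simp add: multiplicity_decomposeI)
qed

text \<open>The parameters are \<open>\<lambda> = \<gamma> = 1\<close>, \<open>F\<^sub>0 = 3\<close>, \<open>\<epsilon>\<^sub>0 = e\<close>, \<open>\<delta>\<^sub>0 = d\<close>, \<open>t\<^sub>0 = t\<close> and \<open>\<mu> = m\<close>.\<close>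
locale septuple_family =
  fixes p e d t :: int
  assumes prime: "prime p"
    and p_cong_1_mod_8: "[p = 1] (mod 8)"
    and p_cong_2_mod_3: "[p = 2] (mod 3)"
    and bezout: "p * e + 9 * d = 1"
    and p_dvd: "p dvd 3 * t + 1"
    and not_3_dvd_t: "\<not> 3 dvd t"
begin

definition A :: int where "A = (p - 9) div 2"
definition D :: int where "D = (p + 9) div 2"
definition B :: "int \<Rightarrow> int" where "B m = 18 * p * (d - e - m * (p + 9)) + 3 * (p + 9) * t"
definition C :: "int \<Rightarrow> int" where "C m = 18 * p * (d + e - m * (p - 9)) + 3 * (p - 9) * t"
definition E :: "int \<Rightarrow> int" where "E m = 9 * (2 * p * (e + 9 * m) - 3 * t) * (6 * (d - p * m) + t)"

definition septuple :: "int \<Rightarrow> int \<times> int \<times> int \<times> int \<times> int \<times> int \<times> int" where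
  "septuple m = (A, B m, C m, D, E m, 6, 3)"

lemma odd_p: "odd p"
  using p_cong_1_mod_8 unfolding cong_def by presburger

lemma p_ge_9: "p \<ge> 9"
  using p_cong_1_mod_8 prime_gt_1_int[OF prime] unfolding cong_def by presburger

lemma not_3_dvd_p: "\<not> 3 dvd p"
  using p_cong_2_mod_3 unfolding cong_def by presburger

lemma double_A: "2 * A = p - 9"
  using odd_p unfolding A_def by presburger

lemma double_D: "2 * D = p + 9"
  using odd_p unfolding D_def by presburger

lemma param_form: "param_form p A (B m) (C m) D (E m) 6 3"
proof -
  have e: "e \<noteq> 0"
  proof
    assume "e = 0"
    with bezout have "9 * d = 1"
      by simp
    then show False
      by presburger
  qed
  have d: "d \<noteq> 0"
    using bezout p_ge_9 by (auto simp: zmult_eq_1_iff)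
  have g: "gcd p 3 = 1"
    using not_3_dvd_p prime_imp_coprime[of 3 p] by (simp add: coprime_commute)
  show ?thesis
    unfolding param_form_def
    by (rule exI[of _ 1], rule exI[of _ 1], rule exI[of _ e], rule exI[of _ d], rule exI[of _ m],
        rule exI[of _ t], rule exI[of _ 3])
      (use e d g bezout in \<open>simp add: A_def B_def C_def D_def E_def\<close>)
qed

lemma cond_A1: "cond_A1 p A (B m) (C m) D (E m) 6 3"
proof -
  have R1: "(B m)\<^sup>2 - (C m)\<^sup>2 + 2 * p * E m * 6 = 0"
    by (simp add: B_def C_def E_def algebra_simps power2_eq_square)
  have "2 * A * B m - 2 * C m * D + p * 6\<^sup>2 = (2 * A) * B m - (2 * D) * C m + 36 * p"
    by (simp add: algebra_simps)
  also have "\<dots> = -36 * p * (p * e + 9 * d - 1)"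
    unfolding double_A double_D by (simp add: B_def C_def algebra_simps)
  finally have R2: "2 * A * B m - 2 * C m * D + p * 6\<^sup>2 = 0"
    using bezout by simp
  have "4 * (A\<^sup>2 - D\<^sup>2 + p * 3\<^sup>2) = (2 * A)\<^sup>2 - (2 * D)\<^sup>2 + 36 * p"
    by (simp add: algebra_simps power2_eq_square)
  then have R3: "A\<^sup>2 - D\<^sup>2 + p * 3\<^sup>2 = 0"
    unfolding double_A double_D by (simp add: algebra_simps power2_eq_square)
  show ?thesis
    unfolding cond_A1_def using R1 R2 R3 by simp
qed

text \<open>\<open>E = 3s(2 - s)\<close> with \<open>s \<equiv> -3t \<equiv> 1 (mod p)\<close>.\<close>
lemma E_cong_3: "[E m = 3] (mod p)"
proof -
  define s where "s = 2 * p * (e + 9 * m) - 3 * t"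
  have "E m = 3 * s * (2 - s) + 6 * s * (p * e + 9 * d - 1)"
    by (simp add: E_def s_def algebra_simps)
  then have "E m = 3 * s * (2 - s)"
    using bezout by simp
  moreover have "s - 1 = p * (2 * (e + 9 * m)) - (3 * t + 1)"
    by (simp add: s_def algebra_simps)
  then have "p dvd s - 1"
    using p_dvd by (metis dvd_diff dvd_triv_left)
  then have "[s = 1] (mod p)"
    by (simp add: cong_iff_dvd_diff)
  then have "[3 * s * (2 - s) = 3 * 1 * (2 - 1)] (mod p)"
    by (intro cong_mult cong_diff cong_refl)
  ultimately show ?thesis
    by simp
qed

lemma double_A_plus_B_cong: "[2 * (A + B m) = -27] (mod p)"
proof -
  have "2 * (A + B m) - -27 = p * (1 + 36 * (d - e - m * (p + 9)) + 6 * t) + 18 * (3 * t + 1)"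
    using double_A by (simp add: B_def algebra_simps)
  then show ?thesis
    unfolding cong_iff_dvd_diff by (simp only: dvd_add[OF dvd_triv_left dvd_mult[OF p_dvd]])
qed

lemma cond_A3: "cond_A3 p A (B m) (C m) D (E m) 6 3"
proof -
  have "\<not> 3 dvd D"
    using double_D not_3_dvd_p by presburger
  then have "gcd D 3 = 1"
    using prime_imp_coprime[of 3 D] by (simp add: coprime_commute)
  moreover have "\<not> [3 = 0] (mod p)"
    using p_ge_9 by (auto simp: cong_0_iff dest: zdvd_imp_le)
  ultimately show ?thesis
    unfolding cond_A3_def using E_cong_3 by (auto dest: cong_trans[OF cong_sym])
qed

lemma cond_A4: "cond_A4 p A (B m) (C m) D (E m) 6 3"
  unfolding cond_A4_def
proof (intro allI impI, elim conjE)
  fix l :: int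
  assume l: "prime l" "odd l" "l \<noteq> 3" "l \<noteq> p"
    and "l dvd gcd (A * C m - B m * D) (gcd (D * E m - C m * 6) (A * E m - B m * 6))"
  then have minors: "l dvd A * C m - B m * D \<and> l dvd D * E m - C m * 6 \<and> l dvd A * E m - B m * 6"
    by simp
  have "\<not> l dvd 3" and "\<not> l dvd p"
    using l prime by (auto simp: primes_dvd_imp_eq)
  moreover have "\<not> l dvd 6"
    using l \<open>\<not> l dvd 3\<close> primes_dvd_imp_eq[of l 2] prime_dvd_mult_iff[of l 2 3] by auto
  ultimately have False
    using prime_not_dvd_all_minors cond_A1[of m, unfolded cond_A1_def] \<open>prime l\<close> minors
    by blast
  then show "square_in_Ql l p" ..
qed

lemma cond_A5: "cond_A5 p A (B m) (C m) D (E m) 6 3"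
  unfolding cond_A5_def
proof (intro exI[of _ 1] conjI allI impI, unfold power_one mult_1_right)
  show "[3 - E m = 0] (mod p)"
    using E_cong_3 by (simp add: cong_iff_dvd_diff dvd_diff_commute)
  fix \<zeta> :: int
  assume "[\<zeta> ^ 3 = 1] (mod p)"
  then have "[\<zeta> = 1] (mod p)"
    using cong_cube_imp_cong[OF prime p_cong_2_mod_3, of \<zeta> 1] by simp
  then have "[A + \<zeta> * B m = A + 1 * B m] (mod p)"
    by (intro cong_add cong_mult cong_refl)
  then have "[2 * (A + \<zeta> * B m) = 2 * (A + B m)] (mod p)"
    by (metis cong_scalar_left mult_1)
  then have "[2 * (A + \<zeta> * B m) = -27] (mod p)"
    using double_A_plus_B_cong by (rule cong_trans)
  then show "\<not> [A + \<zeta> * B m = 0] (mod p)" and "\<not> QuadRes p (A + \<zeta> * B m)"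
    using not_QuadRes_if_double_cong_minus_27[OF prime p_cong_1_mod_8 p_cong_2_mod_3] by auto
qed

lemma cond_A7: "cond_A7 p A (B m) (C m) D (E m) 6 3"
proof -
  have "B m = 3 * (6 * p * (d - e - m * (p + 9)) + (p + 9) * t)"
    by (simp add: B_def algebra_simps)
  then have "3 dvd B m"
    by simp
  moreover have "\<not> 3 dvd A"
    using double_A not_3_dvd_p by presburger
  ultimately show ?thesis
    unfolding cond_A7_def by (simp add: cong_0_iff dvd_add_left_iff)
qed

lemma v3_E: "v3 (E m) = 2"
proof -
  have "2 * p * (e + 9 * m) - 3 * t = 2 * (p * e + 9 * d) + 3 * (6 * p * m - t - 6 * d)"
    by (simp add: algebra_simps)
  then have "\<not> 3 dvd 2 * p * (e + 9 * m) - 3 * t"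
    unfolding bezout by presburger
  moreover have "\<not> 3 dvd 6 * (d - p * m) + t"
    using not_3_dvd_t by presburger
  ultimately show ?thesis
    unfolding E_def by (rule v3_nine_times)
qed

lemma inj_septuple: "inj septuple"
proof (rule injI)
  fix m m'
  assume "septuple m = septuple m'"
  then have "18 * p * (p + 9) * (m' - m) = 0"
    unfolding septuple_def B_def by (simp add: algebra_simps)
  then show "m = m'"
    using p_ge_9 by simp
qed

end

lemma septuple_family_exists:
  fixes p :: int
  assumes "prime p" and "[p = 1] (mod 8)" and "[p = 2] (mod 3)"
  shows "\<exists>e d t. septuple_family p e d t"
proof -
  have "p mod 3 = 2"
    using assms(3) unfolding cong_def by simp
  then have "\<not> 3 dvd p"
    by presburger
  then have "coprime 3 p"
    by (simp add: prime_imp_coprime)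
  then have "gcd p 9 = 1"
    using coprime_power_left_iff[of 3 2 p] by (simp add: coprime_commute)
  then obtain e d where "p * e + 9 * d = 1"
    using bezout_int[of p 9] by (auto simp: ac_simps)
  moreover obtain t where "p dvd 3 * t + 1" and "\<not> 3 dvd t"
  proof -
    define t0 where "t0 = (2 * p - 1) div 3"
    have t0: "3 * t0 + 1 = p * 2"
      using \<open>p mod 3 = 2\<close> unfolding t0_def by presburger
    have t0p: "3 * (t0 + p) + 1 = p * 5"
      using t0 by simp
    have "p dvd 3 * t0 + 1" and "p dvd 3 * (t0 + p) + 1"
      unfolding t0 t0p by simp_all
    moreover have "\<not> 3 dvd t0 \<or> \<not> 3 dvd t0 + p"
      using \<open>p mod 3 = 2\<close> by presburger
    ultimately show ?thesis
      using that by blast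
  qed
  ultimately show ?thesis
    using assms by (blast intro: septuple_family.intro)
qed

theorem lemma9p1:
  fixes p :: int
  assumes "prime p" and "[p = 1] (mod 8)" and "[p = 2] (mod 3)"
  shows "\<exists>S :: (int \<times> int \<times> int \<times> int \<times> int \<times> int \<times> int) set. infinite S \<and>
    (\<forall>(A, B, C, D, E, F, G) \<in> S.
       param_form p A B C D E F G \<and>
       cond_A1 p A B C D E F G \<and> cond_A3 p A B C D E F G \<and> cond_A4 p A B C D E F G \<and>
       cond_A5 p A B C D E F G \<and> cond_A7 p A B C D E F G \<and>
       (\<forall>n::nat. n \<ge> 1 \<longrightarrow> v3 E - v3 G < 6 * int n))"
proof -
  obtain e d t where "septuple_family p e d t"
    using septuple_family_exists[OF assms] by blast
  then interpret septuple_family p e d t .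
  have "infinite (range septuple)"
    using finite_imageD[of septuple UNIV] inj_septuple by auto
  moreover have "v3 (E m) - v3 3 < 6 * int n" if "n \<ge> 1" for m n
    using that by (simp add: v3_E v3_self)
  ultimately show ?thesis
    by (intro exI[of _ "range septuple"])
      (auto simp: septuple_def param_form cond_A1 cond_A3 cond_A4 cond_A5 cond_A7)
qed

end
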